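(* Let $m, n_0, n_1$ be positive integers with $m \geq 4$, $\gcd(n_0, n_1) = 1$ and $\gcd(n_1, m) = 1$, and put $n(\lambda) = n_0 + n_1\lambda$. Consider the equation $$\frac{m}{n_0 + n_1\lambda} = \frac{1}{x(\lambda)} + \frac{1}{y(\lambda)} + \frac{1}{z(\lambda)} \qquad (\ast)$$ in polynomials $x(\lambda), y(\lambda), z(\lambda)$ with positive integer coefficients, required to hold identically in $\lambda$. Then $(\ast)$ has such a solution if and only if there exist positive integers $l, k, s, r$ such that (i) $n_1 = l(mk-1)$, (ii) $s n_1 = kl + r n_0$, (iii) $skl/r$ is a positive integer. In that case $$x(\lambda) = k\,n(\lambda),\qquad z(\lambda) = \frac{kl}{r}(s + r\lambda),\qquad y(\lambda) = n(\lambda)(s + r\lambda)$$ is a solution. Moreover, every solution of $(\ast)$ in polynomials with positive integer coefficients is, up to a permutation of $x, y, z$, of this form for some positive integers $l, k, s, r$ satisfying (i)–(iii).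
   Context: $\lambda$ is an indeterminate. *)

theory Defs
  imports "HOL-Computational_Algebra.Polynomial" "HOL-Library.Multiset"
begin

definition pos_int_poly :: "int poly \<Rightarrow> bool" where
  "pos_int_poly p \<longleftrightarrow> p \<noteq> 0 \<and> (\<forall>i\<le>degree p. coeff p i > 0)"

text \<open>The equation m / n(lambda) = 1/x + 1/y + 1/z identically in lambda, for nonzero
  polynomials x, y, z, with denominators cleared: m x y z = n (yz + xz + xy).\<close>
definition ES_poly_solution :: "int \<Rightarrow> int poly \<Rightarrow> int poly \<Rightarrow> int poly \<Rightarrow> int poly \<Rightarrow> bool" where
  "ES_poly_solution m n x y z \<longleftrightarrow>
     pos_int_poly x \<and> pos_int_poly y \<and> pos_int_poly z \<and>
     smult m (x * y * z) = n * (y * z + x * z + x * y)"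

definition ES_conds :: "int \<Rightarrow> int \<Rightarrow> int \<Rightarrow> int \<Rightarrow> int \<Rightarrow> int \<Rightarrow> int \<Rightarrow> bool" where
  "ES_conds m n0 n1 l k s r \<longleftrightarrow>
     l > 0 \<and> k > 0 \<and> s > 0 \<and> r > 0 \<and>
     n1 = l * (m * k - 1) \<and>
     s * n1 = k * l + r * n0 \<and>
     r dvd s * k * l \<and> s * k * l div r > 0"

end

theory Submission
  imports Defs "HOL-Computational_Algebra.Polynomial_Factorial"
begin

(*
  Comparing degrees in  m x y z = n (y z + x z + x y)  shows that the smallest of the degrees
  of x, y, z equals deg n = 1; if x is linear, then so is m x - n (m does not divide n1), and
  comparing degrees in  (m x - n) y z = n x (y + z)  shows that a second factor, say z, is
  linear. Then y W = n x z for W = m x z - n x - n z, and y cannot be cubic: W would be a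
  positive constant w with  (m x - n) (m z - n) = n^2 + m w,  a product of real-rooted
  linear factors without real root.

  Since gcd n0 n1 = 1, n is a prime element of Z[\<lambda>], so it divides one of x, y, z. If it
  divides the linear x, then x = k n and  (m k - 1) y z = k n (y + z),  so n divides y or z.
  Two constant multiples a n, b n among x, y, z are impossible for m >= 4, because the third
  factor would be  a b n / (m a b - a - b)  with a denominator exceeding a b. Hence
  y = n (s + r \<lambda>), and comparing coefficients in
  (m k - 1) (s + r \<lambda>) z = k (n (s + r \<lambda>) + z)  shows that z is proportional to
  s + r \<lambda> and yields the conditions (i)-(iii). If n divides only y = n v, then x z = v W
  and  W (m v - 1) = n (x + z);  as n cannot divide the linear m v - 1 (m does not divide
  n1), n divides W and hence x z, which is impossible.
*)

lemma pos_int_poly_coeff_pos: "pos_int_poly p \<Longrightarrow> i \<le> degree p \<Longrightarrow> coeff p i > 0"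
  unfolding pos_int_poly_def by auto

lemma pos_int_poly_lead_coeff_pos: "pos_int_poly p \<Longrightarrow> lead_coeff p > 0"
  by (simp add: pos_int_poly_coeff_pos)

lemma pos_int_poly_linear: "a > 0 \<Longrightarrow> b > 0 \<Longrightarrow> pos_int_poly [:a, b:]"
  unfolding pos_int_poly_def by (auto simp: le_Suc_eq coeff_pCons split: nat.split)

lemma pos_int_poly_quadratic: "a > 0 \<Longrightarrow> b > 0 \<Longrightarrow> c > 0 \<Longrightarrow> pos_int_poly [:a, b, c:]"
  unfolding pos_int_poly_def by (auto simp: le_Suc_eq coeff_pCons numeral_2_eq_2 split: nat.split)

lemma poly_eq_linear_coeffs:
  assumes "degree p \<le> 1"
  shows "p = [:coeff p 0, coeff p 1:]"
  using assms by (intro poly_eqI) (auto simp: coeff_pCons coeff_eq_0 split: nat.split)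

lemma smult_eq_const_mult: "smult c p = [:c:] * p"
  by simp

lemma degree_add_lead_coeff_pos:
  fixes p q :: "'a::linordered_idom poly"
  assumes "lead_coeff p > 0" "lead_coeff q > 0"
  shows "degree (p + q) = max (degree p) (degree q)"
proof (cases "degree p" "degree q" rule: linorder_cases)
  case less
  then show ?thesis
    by (simp add: degree_add_eq_right)
next
  case greater
  then show ?thesis
    by (simp add: degree_add_eq_left)
next
  case equal
  then have "coeff (p + q) (degree p) \<noteq> 0"
    using assms by simp
  then have "degree p \<le> degree (p + q)"
    by (rule le_degree)
  moreover have "degree (p + q) \<le> degree p"
    using equal by (intro degree_add_le) simp_all
  ultimately show ?thesis
    using equal by simp
qed

lemma lead_coeff_add_pos:
  fixes p q :: "'a::linordered_idom poly"
  assumes "lead_coeff p > 0" "lead_coeff q > 0"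
  shows "lead_coeff (p + q) > 0"
proof (cases "degree p" "degree q" rule: linorder_cases)
  case less
  then show ?thesis
    using assms(2) by (simp only: lead_coeff_add_le)
next
  case greater
  then show ?thesis
    using assms(1) by (simp only: add.commute[of p] lead_coeff_add_le)
next
  case equal
  then show ?thesis
    using assms degree_add_lead_coeff_pos[OF assms] by simp
qed

lemma linear_mult_linear_neq_square_plus_pos:
  fixes a0 a1 b0 b1 c0 c1 d :: "'a::linordered_idom"
  assumes "[:a0, a1:] * [:b0, b1:] = [:c0, c1:]^2 + [:d:]" and "c1 \<noteq> 0" and "d > 0"
  shows False
proof -
  have "a0 * b0 = c0^2 + d" "a0 * b1 + a1 * b0 = 2 * c0 * c1" "a1 * b1 = c1^2"
    using assms(1) by (simp_all add: power2_eq_square algebra_simps)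
  then have "(a0 * b1 - a1 * b0)^2 + 4 * (d * c1^2) = 0"
    by algebra
  moreover have "d * c1^2 > 0"
    using assms(2,3) by simp
  ultimately show False
    using zero_le_power2[of "a0 * b1 - a1 * b0"] by linarith
qed

lemma ES_poly_solution_swap_xy: "ES_poly_solution m n x y z \<Longrightarrow> ES_poly_solution m n y x z"
  unfolding ES_poly_solution_def by (simp add: ac_simps)

lemma ES_poly_solution_swap_yz: "ES_poly_solution m n x y z \<Longrightarrow> ES_poly_solution m n x z y"
  unfolding ES_poly_solution_def by (simp add: ac_simps)

lemma ES_poly_solution_swap_xz: "ES_poly_solution m n x y z \<Longrightarrow> ES_poly_solution m n z y x"
  unfolding ES_poly_solution_def by (simp add: ac_simps)

lemma ES_poly_solution_eq:
  assumes "ES_poly_solution m n x y z"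
  shows "[:m:] * (x * y * z) = n * (y * z + x * z + x * y)"
  using assms unfolding ES_poly_solution_def smult_eq_const_mult by simp

lemma ES_poly_solution_degree:
  assumes sol: "ES_poly_solution m n x y z" and "m \<noteq> 0" and n: "lead_coeff n > 0"
  shows "degree x + degree y + degree z
           = degree n + max (max (degree y + degree z) (degree x + degree z)) (degree x + degree y)"
proof -
  have x: "lead_coeff x > 0" and y: "lead_coeff y > 0" and z: "lead_coeff z > 0"
    and eq: "smult m (x * y * z) = n * (y * z + x * z + x * y)"
    using sol pos_int_poly_lead_coeff_pos unfolding ES_poly_solution_def by auto
  then have nz: "x \<noteq> 0" "y \<noteq> 0" "z \<noteq> 0" "n \<noteq> 0"
    using n by auto
  have pos: "lead_coeff (y * z) > 0" "lead_coeff (x * z) > 0" "lead_coeff (x * y) > 0"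
    by (simp_all add: lead_coeff_mult x y z mult_pos_pos)
  have "degree (y * z + x * z + x * y) = max (degree (y * z + x * z)) (degree (x * y))"
    by (intro degree_add_lead_coeff_pos lead_coeff_add_pos pos)
  also have "\<dots> = max (max (degree y + degree z) (degree x + degree z)) (degree x + degree y)"
    using nz by (simp add: degree_add_lead_coeff_pos[OF pos(1,2)] degree_mult_eq)
  finally have "degree (n * (y * z + x * z + x * y))
      = degree n + max (max (degree y + degree z) (degree x + degree z)) (degree x + degree y)"
    using nz lead_coeff_add_pos[OF lead_coeff_add_pos[OF pos(1,2)] pos(3)]
    by (metis degree_mult_eq leading_coeff_0_iff less_irrefl)
  moreover have "degree (smult m (x * y * z)) = degree x + degree y + degree z"
    using nz \<open>m \<noteq> 0\<close> by (simp add: degree_mult_eq)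
  ultimately show ?thesis
    using eq by simp
qed

lemma ES_poly_solution_min_degree:
  assumes "ES_poly_solution m n x y z" "m \<noteq> 0" "lead_coeff n > 0"
  shows "degree x = degree n \<or> degree y = degree n \<or> degree z = degree n"
  using ES_poly_solution_degree[OF assms] by linarith

lemma ES_poly_solution_second_min_degree:
  assumes sol: "ES_poly_solution m n x y z" and x: "degree x = degree n"
    and u: "degree (smult m x - n) = degree n" and n: "lead_coeff n > 0"
  shows "degree y = degree n \<or> degree z = degree n"
proof -
  have "lead_coeff x > 0" and y: "lead_coeff y > 0" and z: "lead_coeff z > 0"
    and eq: "smult m (x * y * z) = n * (y * z + x * z + x * y)"
    using sol pos_int_poly_lead_coeff_pos unfolding ES_poly_solution_def by auto
  then have nz: "n \<noteq> 0" "x \<noteq> 0" "y \<noteq> 0" "z \<noteq> 0" "y + z \<noteq> 0"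
    using n lead_coeff_add_pos[OF y z] by (metis leading_coeff_0_iff less_irrefl)+
  have factored: "(smult m x - n) * y * z = n * x * (y + z)"
    using eq by (simp add: algebra_simps)
  then have "smult m x - n \<noteq> 0"
    using nz by auto
  then have "degree n + degree y + degree z = degree n + degree x + max (degree y) (degree z)"
    using factored nz by (metis u degree_mult_eq degree_add_lead_coeff_pos[OF y z] mult_eq_0_iff)
  then show ?thesis
    using x by linarith
qed

lemma ES_poly_solution_middle_degree_le_2:
  assumes sol: "ES_poly_solution m n x y z" and "m > 0"
    and n: "degree n = 1" "lead_coeff n > 0" and x: "degree x = 1" and z: "degree z = 1"
  shows "degree y \<le> 2"
proof (rule ccontr)
  assume "\<not> degree y \<le> 2"
  have "lead_coeff x > 0" and y: "lead_coeff y > 0" and "lead_coeff z > 0"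
    and eq: "smult m (x * y * z) = n * (y * z + x * z + x * y)"
    using sol pos_int_poly_lead_coeff_pos unfolding ES_poly_solution_def by auto
  then have "n \<noteq> 0" "x \<noteq> 0" "z \<noteq> 0"
    using n by auto
  define W where "W = smult m (x * z) - n * x - n * z"
  have yW: "y * W = n * x * z"
    using eq unfolding W_def by (simp add: algebra_simps)
  have "lead_coeff (n * x * z) > 0"
    using n \<open>lead_coeff x > 0\<close> \<open>lead_coeff z > 0\<close> by (simp add: lead_coeff_mult)
  moreover have "degree (n * x * z) = 3"
    using n x z \<open>n \<noteq> 0\<close> \<open>x \<noteq> 0\<close> \<open>z \<noteq> 0\<close> by (simp add: degree_mult_eq)
  moreover have "W \<noteq> 0"
    using yW \<open>n \<noteq> 0\<close> \<open>x \<noteq> 0\<close> \<open>z \<noteq> 0\<close> by auto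
  ultimately have "lead_coeff y * lead_coeff W > 0" and "degree y + degree W = 3"
    using yW y by (metis lead_coeff_mult, metis degree_mult_eq leading_coeff_0_iff less_irrefl)
  moreover have "degree W = 0"
    using \<open>degree y + degree W = 3\<close> \<open>\<not> degree y \<le> 2\<close> by linarith
  then obtain w where W: "W = [:w:]"
    by (elim degree_eq_zeroE)
  ultimately have "w > 0"
    using y by (simp add: zero_less_mult_iff)
  have "([:m:] * x - n) * ([:m:] * z - n) = n^2 + [:m:] * W"
    unfolding W_def smult_eq_const_mult by algebra
  moreover obtain x0 x1 z0 z1 c0 c1 where "x = [:x0, x1:]" "z = [:z0, z1:]" and nc: "n = [:c0, c1:]"
    using poly_eq_linear_coeffs n x z by (metis order_refl)
  ultimately have prod:
      "[:m * x0 - c0, m * x1 - c1:] * [:m * z0 - c0, m * z1 - c1:] = [:c0, c1:]^2 + [:m * w:]"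
    using W by (simp add: mult.commute)
  have "c1 \<noteq> 0"
    using n nc by auto
  show False
    using \<open>m > 0\<close> \<open>w > 0\<close>
    by (intro linear_mult_linear_neq_square_plus_pos[OF prod \<open>c1 \<noteq> 0\<close>]) simp
qed

lemma ES_poly_solution_of_conds:
  assumes conds: "ES_conds m n0 n1 l k s r" and "n0 > 0" "n1 > 0"
  shows "ES_poly_solution m [:n0, n1:]
           (smult k [:n0, n1:]) ([:n0, n1:] * [:s, r:]) [:s * k * l div r, k * l:]"
proof -
  define n v z where "n = [:n0, n1:]" and "v = [:s, r:]" and "z = [:s * k * l div r, k * l:]"
  have pos: "l > 0" "k > 0" "s > 0" "r > 0" "s * k * l div r > 0"
    and n1: "n1 = l * (m * k - 1)" and n0: "s * n1 = k * l + r * n0" and "r dvd s * k * l"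
    using conds unfolding ES_conds_def by auto
  have z: "[:r:] * z = [:k:] * [:l:] * v"
    unfolding z_def v_def using \<open>r dvd s * k * l\<close> by (simp add: algebra_simps)
  have v: "([:m:] * [:k:] - 1) * [:l:] * v = [:k:] * [:l:] + [:r:] * n"
    unfolding v_def n_def using n0 unfolding n1 by (simp add: algebra_simps)
  have "[:r:] * (([:m:] * [:k:] - 1) * v * z - [:k:] * (n * v + z))
      = [:k:] * v * (([:m:] * [:k:] - 1) * [:l:] * v - [:k:] * [:l:] - [:r:] * n)"
    using z by algebra
  also have "\<dots> = 0"
    using v by simp
  finally have "([:m:] * [:k:] - 1) * v * z = [:k:] * (n * v + z)"
    using pos by simp
  then have "[:m:] * ([:k:] * n * (n * v) * z) = n * (n * v * z + [:k:] * n * z + [:k:] * n * (n * v))"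
    by algebra
  then have "smult m (smult k n * (n * v) * z) = n * (n * v * z + smult k n * z + smult k n * (n * v))"
    unfolding smult_eq_const_mult .
  moreover have "pos_int_poly (smult k n)" "pos_int_poly (n * v)" "pos_int_poly z"
    unfolding n_def v_def z_def using pos \<open>n0 > 0\<close> \<open>n1 > 0\<close>
    by (auto intro!: pos_int_poly_linear pos_int_poly_quadratic simp: add_pos_pos)
  ultimately show ?thesis
    unfolding ES_poly_solution_def n_def v_def z_def by simp
qed

locale ES_linear_denominator =
  fixes m n0 n1 :: int and n :: "int poly"
  assumes n_def: "n = [:n0, n1:]"
    and m_ge_4: "m \<ge> 4" and n0_pos: "n0 > 0" and n1_pos: "n1 > 0"
    and coprime_n0_n1: "gcd n0 n1 = 1" and coprime_n1_m: "gcd n1 m = 1"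
begin

lemma degree_n: "degree n = 1" and lead_coeff_n: "lead_coeff n = n1" and n_nonzero: "n \<noteq> 0"
  using n1_pos unfolding n_def by auto

lemma prime_elem_n: "prime_elem n"
  unfolding n_def using n1_pos coprime_n0_n1
  by (intro prime_elem_linear_poly) (simp_all add: coprime_iff_gcd_eq_1)

lemma n_not_dvd_const: "c \<noteq> 0 \<Longrightarrow> \<not> n dvd [:c:]"
  using dvd_imp_degree_le[of n "[:c:]"] degree_n by auto

lemma m_mult_neq_n1: "m * a \<noteq> n1"
proof
  assume "m * a = n1"
  then have "m dvd gcd n1 m"
    by auto
  then show False
    using coprime_n1_m m_ge_4 zdvd_imp_le by fastforce
qed

lemma n_dvd_some_factor:
  assumes "ES_poly_solution m n x y z"
  shows "n dvd x \<or> n dvd y \<or> n dvd z"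
proof -
  have "n dvd [:m:] * (x * y * z)"
    using ES_poly_solution_eq[OF assms] by (metis dvd_triv_left)
  moreover have "\<not> n dvd [:m:]"
    using n_not_dvd_const m_ge_4 by simp
  ultimately have "n dvd x * y * z"
    using prime_elem_n prime_elem_dvd_mult_iff by blast
  then show ?thesis
    using prime_elem_n by (simp add: prime_elem_dvd_mult_iff)
qed

lemma second_linear_factor:
  assumes sol: "ES_poly_solution m n x y z" and x: "degree x = 1"
  shows "degree y = 1 \<or> degree z = 1"
proof -
  obtain x0 x1 where "x = [:x0, x1:]"
    using x poly_eq_linear_coeffs by (metis order_refl)
  then have "degree (smult m x - n) = 1"
    using m_mult_neq_n1[of x1] unfolding n_def by simp
  then show ?thesis
    using ES_poly_solution_second_min_degree[OF sol] x degree_n lead_coeff_n n1_pos by simp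
qed

lemma n_dvd_cofactor:
  assumes "n dvd p" and "p \<noteq> 0"
  obtains q where "p = n * q" and "degree p = degree q + 1"
proof -
  obtain q where q: "p = n * q"
    using assms(1) by blast
  with assms(2) have "degree p = degree q + 1"
    using n_nonzero degree_n by (simp add: degree_mult_eq)
  with q show thesis
    using that by blast
qed

lemma n_dvd_imp_smult:
  assumes "n dvd p" and "p \<noteq> 0" and "degree p \<le> 1"
  obtains c where "p = smult c n"
proof -
  obtain q where q: "p = n * q" and "degree p = degree q + 1"
    using n_dvd_cofactor[OF assms(1,2)] .
  then obtain c where "q = [:c:]"
    using assms(3) by (auto elim: degree_eq_zeroE)
  with q show thesis
    using that by (simp add: mult.commute)
qed

lemma pos_int_poly_smult_n_pos:
  assumes "pos_int_poly (smult c n)"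
  shows "c > 0"
  using pos_int_poly_coeff_pos[OF assms, of 0] n0_pos unfolding n_def by (simp add: zero_less_mult_iff)

lemma no_two_multiples_of_n:
  assumes sol: "ES_poly_solution m n x y z" and x: "x = smult a n" and y: "y = smult b n"
  shows False
proof -
  have "a > 0" "b > 0"
    using sol pos_int_poly_smult_n_pos unfolding ES_poly_solution_def x y by auto
  define t where "t = m * a * b - a - b"
  have "[:t:] = [:m:] * [:a:] * [:b:] - [:a:] - [:b:]" "[:a * b:] = [:a:] * [:b:]"
    unfolding t_def by (simp_all add: mult.commute)
  then have "n * n * ([:t:] * z - [:a * b:] * n) = 0"
    using ES_poly_solution_eq[OF sol] unfolding x y smult_eq_const_mult by algebra
  then have "[:t:] * z = [:a * b:] * n"
    using n_nonzero by simp
  then have "coeff ([:t:] * z) i = coeff ([:a * b:] * n) i" for i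
    by (simp only:)
  then have "t * coeff z 0 = a * b * n0" "t * coeff z 1 = a * b * n1"
    unfolding n_def by simp_all
  then have "t dvd gcd (a * b * n0) (a * b * n1)"
    by (metis dvd_triv_left gcd_greatest)
  also have "gcd (a * b * n0) (a * b * n1) = a * b"
    using gcd_mult_distrib_int[of "a * b" n0 n1] coprime_n0_n1 \<open>a > 0\<close> \<open>b > 0\<close> by simp
  finally have "t \<le> a * b"
    using \<open>a > 0\<close> \<open>b > 0\<close> by (simp add: zdvd_imp_le)
  moreover have "m * (a * b) \<ge> 4 * (a * b)" "a * b \<ge> a" "a * b \<ge> b" "a * b > 0"
    using m_ge_4 \<open>a > 0\<close> \<open>b > 0\<close> by (simp_all add: mult_right_mono)
  ultimately show False
    unfolding t_def by (simp add: mult.assoc)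
qed

lemma n_dvd_another_factor:
  assumes sol: "ES_poly_solution m n x y z" and x: "x = smult k n"
  shows "n dvd y \<or> n dvd z"
proof -
  have "k > 0"
    using sol pos_int_poly_smult_n_pos unfolding ES_poly_solution_def x by auto
  have "[:m * k - 1:] = [:m:] * [:k:] - 1"
    by (simp add: one_pCons mult.commute)
  then have "n * ([:m * k - 1:] * (y * z) - n * ([:k:] * (y + z))) = 0"
    using ES_poly_solution_eq[OF sol] unfolding x smult_eq_const_mult by algebra
  then have "n dvd [:m * k - 1:] * (y * z)"
    using n_nonzero by (metis dvd_triv_left eq_iff_diff_eq_0 mult_eq_0_iff)
  moreover have "\<not> n dvd [:m * k - 1:]"
    using n_not_dvd_const m_ge_4 \<open>k > 0\<close> by (simp add: pos_zmult_eq_1_iff)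
  ultimately have "n dvd y * z"
    using prime_elem_n prime_elem_dvd_mult_iff by blast
  then show ?thesis
    using prime_elem_n by (simp add: prime_elem_dvd_mult_iff)
qed

lemma solution_normal_form:
  assumes sol: "ES_poly_solution m n x y z" and x: "x = smult k n" and y: "y = n * [:s, r:]"
    and "r \<noteq> 0" and "degree z = 1"
  obtains l where "ES_conds m n0 n1 l k s r" and "z = [:s * k * l div r, k * l:]"
proof -
  obtain z0 z1 where z: "z = [:z0, z1:]"
    using \<open>degree z = 1\<close> poly_eq_linear_coeffs by (metis order_refl)
  have "k > 0"
    using sol pos_int_poly_smult_n_pos unfolding ES_poly_solution_def x by auto
  have "degree y = degree n + degree [:s, r:]"
    unfolding y by (rule degree_mult_eq) (use n_nonzero \<open>r \<noteq> 0\<close> in auto)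
  then have "degree y = 2"
    using \<open>r \<noteq> 0\<close> degree_n by simp
  moreover have "pos_int_poly y" "pos_int_poly z"
    using sol unfolding ES_poly_solution_def by auto
  ultimately have "coeff y 0 > 0" "coeff y 2 > 0" "coeff z 0 > 0"
    using pos_int_poly_coeff_pos by auto
  then have "s > 0" "r > 0" "z0 > 0"
    using n0_pos n1_pos unfolding y z n_def by (simp_all add: zero_less_mult_iff numeral_2_eq_2)
  define v where "v = [:s, r:]"
  have "[:m * k - 1:] = [:m:] * [:k:] - 1"
    by (simp add: one_pCons mult.commute)
  then have "n * n * ([:m * k - 1:] * v * z - [:k:] * (n * v + z)) = 0"
    using ES_poly_solution_eq[OF sol] unfolding x y v_def[symmetric] smult_eq_const_mult by algebra
  then have "[:m * k - 1:] * v * z = [:k:] * (n * v + z)"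
    using n_nonzero by simp
  then have e: "(m * k - 1) * s * z0 = k * (n0 * s + z0)"
      "(m * k - 1) * (s * z1 + r * z0) = k * (n0 * r + n1 * s + z1)"
      "(m * k - 1) * r * z1 = k * (n1 * r)"
    unfolding v_def z n_def by (simp_all add: algebra_simps)
  have "r * ((m * k - 1) * z1 - k * n1) = 0"
    using e(3) by algebra
  then have z1: "(m * k - 1) * z1 = k * n1"
    using \<open>r > 0\<close> by simp
  have "k * r * (z0 * r - z1 * s) = 0"
    \<comment> \<open>evaluate the coefficient identities at the root -s/r of v\<close>
    using e by algebra
  then have "z0 * r = z1 * s"
    using \<open>k > 0\<close> \<open>r > 0\<close> by simp
  have "coprime (m * k - 1) k"
    using coprime_diff_one_left[of "m * k"] by simp
  then have "m * k - 1 dvd n1"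
    using z1 by (metis coprime_dvd_mult_right_iff dvd_triv_left)
  then obtain l where l: "n1 = l * (m * k - 1)"
    by (metis dvd_def mult.commute)
  have "m * 1 \<le> m * k"
    using m_ge_4 \<open>k > 0\<close> by (intro mult_left_mono) auto
  then have "m * k - 1 > 0"
    using m_ge_4 by linarith
  then have "l > 0"
    using l n1_pos by (simp add: zero_less_mult_iff)
  have "(m * k - 1) * (z1 - k * l) = 0"
    using z1 l by algebra
  then have "z1 = k * l"
    using \<open>m * k - 1 > 0\<close> by simp
  then have rz0: "r * z0 = s * k * l"
    using \<open>z0 * r = z1 * s\<close> by (simp add: algebra_simps)
  have "s * k * (s * n1 - (k * l + r * n0)) = 0"
    using e(1) rz0 l by algebra
  then have "s * n1 = k * l + r * n0"
    using \<open>s > 0\<close> \<open>k > 0\<close> by simp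
  moreover have "s * k * l div r = z0"
    using rz0 \<open>r > 0\<close> by (metis nonzero_mult_div_cancel_left less_irrefl)
  ultimately show thesis
    using that l rz0 \<open>l > 0\<close> \<open>k > 0\<close> \<open>s > 0\<close> \<open>r > 0\<close> \<open>z0 > 0\<close> \<open>z1 = k * l\<close>
    unfolding ES_conds_def z by (metis dvd_triv_left)
qed

lemma n_not_dvd_smult_minus_1:
  assumes "degree v \<le> 1"
  shows "\<not> n dvd smult m v - 1"
proof
  assume dvd: "n dvd smult m v - 1"
  obtain v0 v1 where v: "v = [:v0, v1:]"
    using poly_eq_linear_coeffs[OF assms] by blast
  have "m * v0 \<noteq> 1"
    using m_ge_4 by (auto simp: zmult_eq_1_iff)
  then have "smult m v - 1 = [:m * v0 - 1, m * v1:]"  "smult m v - 1 \<noteq> 0"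
    unfolding v by (simp_all add: one_pCons)
  moreover have "degree (smult m v - 1) \<le> 1"
    using assms by (simp add: degree_diff_le)
  ultimately obtain c where "[:m * v0 - 1, m * v1:] = smult c n"
    using n_dvd_imp_smult[OF dvd] by auto
  then have c: "m * v0 - 1 = c * n0" "m * v1 = c * n1"
    unfolding n_def by simp_all
  have "coprime m n1"
    using coprime_n1_m by (simp add: coprime_iff_gcd_eq_1 gcd.commute)
  moreover have "m dvd c * n1"
    using c(2) by (metis dvd_triv_left)
  ultimately have "m dvd c"
    by (simp add: coprime_dvd_mult_left_iff)
  then have "m dvd m * v0 - (m * v0 - 1)"
    unfolding c(1) by (intro dvd_diff dvd_mult2) simp_all
  then have "m dvd 1"
    by simp
  then show False
    using m_ge_4 zdvd_imp_le by fastforce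
qed

lemma middle_factor_only_absurd:
  assumes sol: "ES_poly_solution m n x y z" and "degree y \<le> 2"
    and "n dvd y" and "\<not> n dvd x" and "\<not> n dvd z"
  shows False
proof -
  have "y \<noteq> 0"
    using sol unfolding ES_poly_solution_def pos_int_poly_def by auto
  then obtain v where y: "y = n * v" and "degree y = degree v + 1"
    using n_dvd_cofactor \<open>n dvd y\<close> by blast
  then have "degree v \<le> 1"
    using \<open>degree y \<le> 2\<close> by simp
  define W where "W = [:m:] * (x * z) - n * x - n * z"
  have "n * (v * W - x * z) = 0"
    using ES_poly_solution_eq[OF sol] unfolding y W_def by algebra
  then have xz: "x * z = v * W"
    using n_nonzero by simp
  then have "W * ([:m:] * v - 1) = n * (x + z)"
    unfolding W_def by algebra
  then have "n dvd W * (smult m v - 1)"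
    unfolding smult_eq_const_mult by (metis dvd_triv_left)
  then have "n dvd W"
    using prime_elem_n n_not_dvd_smult_minus_1[OF \<open>degree v \<le> 1\<close>] prime_elem_dvd_mult_iff by blast
  then have "n dvd x * z"
    unfolding xz by simp
  then show False
    using prime_elem_n \<open>\<not> n dvd x\<close> \<open>\<not> n dvd z\<close> prime_elem_dvd_mult_iff by blast
qed

lemma classify_with_first_multiple:
  assumes sol: "ES_poly_solution m n x y z" and "n dvd x" and "degree x = 1"
    and "degree y \<le> 2" and "degree z = 1"
  obtains l k s r where "ES_conds m n0 n1 l k s r" and "x = smult k n"
    and "y = n * [:s, r:]" and "z = [:s * k * l div r, k * l:]"
proof -
  have "x \<noteq> 0" "y \<noteq> 0" "z \<noteq> 0"
    using sol unfolding ES_poly_solution_def pos_int_poly_def by auto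
  obtain k where x: "x = smult k n"
    using n_dvd_imp_smult[OF \<open>n dvd x\<close> \<open>x \<noteq> 0\<close>] \<open>degree x = 1\<close> by auto
  consider "n dvd z" | "n dvd y"
    using n_dvd_another_factor[OF sol x] by blast
  then show thesis
  proof cases
    case 1
    then obtain c where "z = smult c n"
      using n_dvd_imp_smult[OF _ \<open>z \<noteq> 0\<close>] \<open>degree z = 1\<close> by auto
    then show thesis
      using no_two_multiples_of_n[OF ES_poly_solution_swap_yz[OF sol] x] by blast
  next
    case 2
    then obtain v where y: "y = n * v" and "degree y = degree v + 1"
      using n_dvd_cofactor \<open>y \<noteq> 0\<close> by blast
    then have "degree v \<le> 1"
      using \<open>degree y \<le> 2\<close> by simp
    then obtain s r where v: "v = [:s, r:]"
      using poly_eq_linear_coeffs by blast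
    show thesis
    proof (cases "r = 0")
      case True
      then have "y = smult s n"
        unfolding y v by simp
      then show thesis
        using no_two_multiples_of_n[OF sol x] by blast
    next
      case False
      then obtain l where "ES_conds m n0 n1 l k s r" and "z = [:s * k * l div r, k * l:]"
        using solution_normal_form[OF sol x y[unfolded v] False \<open>degree z = 1\<close>] by blast
      then show thesis
        using that x y v by blast
    qed
  qed
qed

lemma classify_two_linear:
  assumes sol: "ES_poly_solution m n x y z" and x: "degree x = 1" and z: "degree z = 1"
  shows "\<exists>l k s r. ES_conds m n0 n1 l k s r \<and>
           {#x, y, z#} = {#smult k n, n * [:s, r:], [:s * k * l div r, k * l:]#}"
proof -
  have y: "degree y \<le> 2"
    using ES_poly_solution_middle_degree_le_2[OF sol] m_ge_4 degree_n lead_coeff_n n1_pos x z by simp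
  consider "n dvd x" | "n dvd z" | "n dvd y" "\<not> n dvd x" "\<not> n dvd z"
    using n_dvd_some_factor[OF sol] by blast
  then show ?thesis
  proof cases
    case 1
    obtain l k s r where "ES_conds m n0 n1 l k s r" and "x = smult k n"
      and "y = n * [:s, r:]" and "z = [:s * k * l div r, k * l:]"
      by (rule classify_with_first_multiple[OF sol 1 x y z])
    then show ?thesis
      by blast
  next
    case 2
    obtain l k s r where "ES_conds m n0 n1 l k s r" and "z = smult k n"
      and "y = n * [:s, r:]" and "x = [:s * k * l div r, k * l:]"
      by (rule classify_with_first_multiple[OF ES_poly_solution_swap_xz[OF sol] 2 z y x])
    moreover have "{#x, y, z#} = {#z, y, x#}"
      by (simp add: add_mset_commute)
    ultimately show ?thesis
      by blast
  next
    case 3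
    then show ?thesis
      using middle_factor_only_absurd[OF sol y] by blast
  qed
qed

lemma classify_solution:
  assumes sol: "ES_poly_solution m n x y z"
  shows "\<exists>l k s r. ES_conds m n0 n1 l k s r \<and>
           {#x, y, z#} = {#smult k n, n * [:s, r:], [:s * k * l div r, k * l:]#}"
proof -
  have one_linear: "\<exists>l k s r. ES_conds m n0 n1 l k s r \<and>
           {#x', y', z'#} = {#smult k n, n * [:s, r:], [:s * k * l div r, k * l:]#}"
    if sol': "ES_poly_solution m n x' y' z'" and "degree x' = 1" for x' y' z'
    using second_linear_factor[OF sol' \<open>degree x' = 1\<close>]
  proof
    assume "degree y' = 1"
    have perm: "{#x', y', z'#} = {#x', z', y'#}"
      by (simp add: add_mset_commute)
    show ?thesis
      unfolding perm
      by (rule classify_two_linear[OF ES_poly_solution_swap_yz[OF sol'] \<open>degree x' = 1\<close> \<open>degree y' = 1\<close>])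
  qed (use classify_two_linear[OF sol' \<open>degree x' = 1\<close>] in blast)
  have "degree x = 1 \<or> degree y = 1 \<or> degree z = 1"
    using ES_poly_solution_min_degree[OF sol] m_ge_4 degree_n lead_coeff_n n1_pos by simp
  then show ?thesis
  proof (elim disjE)
    assume "degree y = 1"
    have perm: "{#x, y, z#} = {#y, x, z#}"
      by (simp add: add_mset_commute)
    show ?thesis
      unfolding perm by (rule one_linear[OF ES_poly_solution_swap_xy[OF sol] \<open>degree y = 1\<close>])
  next
    assume "degree z = 1"
    have perm: "{#x, y, z#} = {#z, y, x#}"
      by (simp add: add_mset_commute)
    show ?thesis
      unfolding perm by (rule one_linear[OF ES_poly_solution_swap_xz[OF sol] \<open>degree z = 1\<close>])
  qed (use one_linear[OF sol] in blast)
qed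

end

theorem mainTheorem1:
  fixes m n0 n1 :: int
  assumes "m \<ge> 4" and "n0 > 0" and "n1 > 0"
    and "gcd n0 n1 = 1" and "gcd n1 m = 1"
  shows "((\<exists>x y z. ES_poly_solution m [:n0, n1:] x y z) \<longleftrightarrow>
            (\<exists>l k s r. ES_conds m n0 n1 l k s r))
       \<and> (\<forall>l k s r. ES_conds m n0 n1 l k s r \<longrightarrow>
            ES_poly_solution m [:n0, n1:]
              (smult k [:n0, n1:]) ([:n0, n1:] * [:s, r:]) [:s * k * l div r, k * l:])
       \<and> (\<forall>x y z. ES_poly_solution m [:n0, n1:] x y z \<longrightarrow>
            (\<exists>l k s r. ES_conds m n0 n1 l k s r \<and>
               {#x, y, z#} = {#smult k [:n0, n1:], [:n0, n1:] * [:s, r:], [:s * k * l div r, k * l:]#}))"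
proof -
  interpret ES_linear_denominator m n0 n1 "[:n0, n1:]"
    using assms by unfold_locales simp_all
  have solutions: "\<forall>l k s r. ES_conds m n0 n1 l k s r \<longrightarrow>
      ES_poly_solution m [:n0, n1:] (smult k [:n0, n1:]) ([:n0, n1:] * [:s, r:]) [:s * k * l div r, k * l:]"
    using ES_poly_solution_of_conds assms(2,3) by blast
  moreover have "\<forall>x y z. ES_poly_solution m [:n0, n1:] x y z \<longrightarrow>
      (\<exists>l k s r. ES_conds m n0 n1 l k s r \<and>
         {#x, y, z#} = {#smult k [:n0, n1:], [:n0, n1:] * [:s, r:], [:s * k * l div r, k * l:]#})"
    using classify_solution by blast
  ultimately show ?thesis
    by blast
qed

end
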